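(* For all integers $m\ge0$: (i) for all $n\ge0$, $r_{2n}(-q^m,q)=(q;q^2)_n\,T_m(1,-q^{2n},q)$; (ii) for all $n\ge1$, $r_{2n-1}(-q^m,q)=(q;q^2)_n\,U_{m-1}(1,-q^{2n},q)$; (iii) for all $n\ge0$, $r_n(q^{2m+1},q^2)=(-q;q)_n\,V_m(1,-q^n,-q)$.
   Context: $q$ is an indeterminate. $(x;q)_n=\prod_{j=0}^{n-1}(1-q^jx)$; the Gaussian binomial coefficient is $\begin{bmatrix} n\\ j\end{bmatrix}_q=\frac{(q;q)_n}{(q;q)_j(q;q)_{n-j}}$ for $0\le j\le n$ and $0$ otherwise; $r_n(s,q)=\sum_{j=0}^n\begin{bmatrix} n\\ j\end{bmatrix}_q s^j$. The $q$-Chebyshev polynomials are defined by recurrences in $m$: $T_0(x,s,q)=1$, $T_1(x,s,q)=x$, $T_m(x,s,q)=(1+q^{m-1})xT_{m-1}(x,s,q)+q^{m-1}sT_{m-2}(x,s,q)$ for $m\ge2$; $U_{-1}(x,s,q)=0$, $U_0(x,s,q)=1$, $U_m(x,s,q)=(1+q^m)xU_{m-1}(x,s,q)+q^{m-1}sU_{m-2}(x,s,q)$ for $m\ge1$; $V_0(x,s,q)=1$, $V_1(x,s,q)=(1+q)x+qs$, $V_m(x,s,q)=(1+q^{2m-1})xV_{m-1}(x,s,q)-q^{2m-1}s^2V_{m-2}(x,s,q)$ for $m\ge2$. In (iii), $V_m(1,-q^n,-q)$ means $V_m(x,s,p)$ evaluated at $x=1$, $s=-q^n$, $p=-q$. 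*)

theory Defs
  imports "HOL-Computational_Algebra.Polynomial"
begin

text \<open>The indeterminate q is modelled as the polynomial variable [:0,1:] over the rationals.\<close>

definition qX :: "rat poly" where "qX = [:0, 1:]"

definition qpoch :: "'a::comm_ring_1 \<Rightarrow> 'a \<Rightarrow> nat \<Rightarrow> 'a" where
  "qpoch x q n = (\<Prod>j<n. (1 - q ^ j * x))"

text \<open>Gaussian binomial coefficient (exact polynomial division).\<close>
definition gbinom :: "rat poly \<Rightarrow> nat \<Rightarrow> nat \<Rightarrow> rat poly" where
  "gbinom q n j = (if j \<le> n then qpoch q q n div (qpoch q q j * qpoch q q (n - j)) else 0)"

definition rpoly :: "nat \<Rightarrow> rat poly \<Rightarrow> rat poly \<Rightarrow> rat poly" where
  "rpoly n s q = (\<Sum>j=0..n. gbinom q n j * s ^ j)"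

fun qT :: "nat \<Rightarrow> 'a::comm_ring_1 \<Rightarrow> 'a \<Rightarrow> 'a \<Rightarrow> 'a" where
  "qT 0 x s q = 1"
| "qT (Suc 0) x s q = x"
| "qT (Suc (Suc m)) x s q =
     (1 + q ^ (Suc m)) * x * qT (Suc m) x s q + q ^ (Suc m) * s * qT m x s q"

text \<open>U_m for m \<ge> 0; U_{-1} = 0 is used for the value U_1 = (1+q)x.\<close>
fun qU :: "nat \<Rightarrow> 'a::comm_ring_1 \<Rightarrow> 'a \<Rightarrow> 'a \<Rightarrow> 'a" where
  "qU 0 x s q = 1"
| "qU (Suc 0) x s q = (1 + q) * x"
| "qU (Suc (Suc m)) x s q =
     (1 + q ^ (Suc (Suc m))) * x * qU (Suc m) x s q + q ^ (Suc m) * s * qU m x s q"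

definition qUm1 :: "nat \<Rightarrow> 'a::comm_ring_1 \<Rightarrow> 'a \<Rightarrow> 'a \<Rightarrow> 'a" where
  "qUm1 m x s q = (if m = 0 then 0 else qU (m - 1) x s q)"

fun qV :: "nat \<Rightarrow> 'a::comm_ring_1 \<Rightarrow> 'a \<Rightarrow> 'a \<Rightarrow> 'a" where
  "qV 0 x s q = 1"
| "qV (Suc 0) x s q = (1 + q) * x + q * s"
| "qV (Suc (Suc m)) x s q =
     (1 + q ^ (2 * Suc (Suc m) - 1)) * x * qV (Suc m) x s q
     - q ^ (2 * Suc (Suc m) - 1) * s ^ 2 * qV m x s q"

end

theory Submission
  imports Defs
begin

text \<open>The r_n are the Rogers-Szego polynomials H_n(s) = sum_j [n,j]_q s^j. Besides the
  q-Pascal rule H_{n+1}(s) = s H_n(s) + H_n(qs) they satisfy the q-difference equation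
  H_{n+1}(s) - H_{n+1}(qs) = s (1 - q^{n+1}) H_n(s). For fixed n, these turn s = -q^m into a
  pair of coupled first-order recurrences in m, equivalent to the second-order recurrences
  defining T_m and U_{m-1} with s = -q^{2n}; similarly s = q^{2m+1} in base q^2 leads to the
  recurrence of V_m. The initial values are Gauss's evaluation H_{2n}(-1) = (q;q^2)_n,
  H_{2n+1}(-1) = 0 and its analogue H_n(q) = (-q;q)_n in base q^2.\<close>

fun qbinom :: "'a::comm_ring_1 \<Rightarrow> nat \<Rightarrow> nat \<Rightarrow> 'a" where
  "qbinom Q 0 j = (if j = 0 then 1 else 0)"
| "qbinom Q (Suc n) 0 = 1"
| "qbinom Q (Suc n) (Suc j) = qbinom Q n j + Q ^ Suc j * qbinom Q n (Suc j)"

lemma qbinom_0_right [simp]: "qbinom Q n 0 = 1"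
  by (cases n) auto

lemma qbinom_eq_0: "n < j \<Longrightarrow> qbinom Q n j = 0"
proof (induction n arbitrary: j)
  case (Suc n)
  then obtain j' where "j = Suc j'" by (cases j) auto
  with Suc show ?case by simp
qed simp

lemma qpoch_0 [simp]: "qpoch x q 0 = 1"
  by (simp add: qpoch_def)

lemma qpoch_Suc: "qpoch x q (Suc n) = qpoch x q n * (1 - q ^ n * x)"
  by (simp add: qpoch_def)

lemma qpoch_self_Suc: "qpoch Q Q (Suc n) = qpoch Q Q n * (1 - Q ^ Suc n)"
  by (simp add: qpoch_Suc mult.commute)

lemma qbinom_mult_qpoch:
  "j \<le> n \<Longrightarrow> qbinom Q n j * (qpoch Q Q j * qpoch Q Q (n - j)) = qpoch Q Q n"
proof (induction n arbitrary: j)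
  case (Suc n)
  show ?case
  proof (cases j)
    case (Suc i)
    consider "i = n" | "i < n" using Suc \<open>j \<le> Suc n\<close> by linarith
    then show ?thesis
    proof cases
      case 1
      then show ?thesis
        using Suc.IH[of n] \<open>j = Suc i\<close> by (simp add: qbinom_eq_0 qpoch_self_Suc) (metis mult.assoc)
    next
      case 2
      define k where "k = n - Suc i"
      have n_eq: "n - i = Suc k" "Suc n - Suc i = Suc k" "Suc i + Suc k = Suc n"
        using 2 by (simp_all add: k_def)
      then have pow: "Q ^ Suc i * Q ^ Suc k = Q ^ Suc n"
        by (metis power_add)
      define X where "X = qpoch Q Q n"
      have IH1: "qbinom Q n i * (qpoch Q Q i * (qpoch Q Q k * (1 - Q ^ Suc k))) = X"
        using Suc.IH[of i] 2 by (simp add: n_eq qpoch_self_Suc X_def)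
      have IH2: "qbinom Q n (Suc i) * (qpoch Q Q i * (1 - Q ^ Suc i) * qpoch Q Q k) = X"
        using Suc.IH[of "Suc i"] 2 by (simp add: k_def qpoch_self_Suc X_def)
      \<comment> \<open>the two q-Pascal summands contribute the fractions 1 - q^{i+1} and q^{i+1}(1 - q^{n-i}) of the result\<close>
      have "qbinom Q (Suc n) j * (qpoch Q Q j * qpoch Q Q (Suc n - j))
          = (1 - Q ^ Suc i) * (qbinom Q n i * (qpoch Q Q i * (qpoch Q Q k * (1 - Q ^ Suc k))))
            + Q ^ Suc i * (1 - Q ^ Suc k) * (qbinom Q n (Suc i) * (qpoch Q Q i * (1 - Q ^ Suc i) * qpoch Q Q k))"
        by (simp add: \<open>j = Suc i\<close> n_eq qpoch_self_Suc algebra_simps)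
      also have "\<dots> = X * (1 - Q ^ Suc i * Q ^ Suc k)"
        by (simp only: IH1 IH2) (simp add: algebra_simps)
      also have "\<dots> = qpoch Q Q (Suc n)"
        by (simp only: pow X_def qpoch_self_Suc)
      finally show ?thesis .
    qed
  qed simp
qed simp

lemma qbinom_absorb_Suc_Suc:
  fixes Q :: "'a::idom"
  assumes nz: "\<And>k. qpoch Q Q k \<noteq> 0"
  shows "qbinom Q (Suc n) (Suc j) * (1 - Q ^ Suc j) = (1 - Q ^ Suc n) * qbinom Q n j"
proof (cases "j \<le> n")
  case True
  let ?M = "qpoch Q Q j * qpoch Q Q (n - j)"
  have "qbinom Q (Suc n) (Suc j) * (1 - Q ^ Suc j) * ?M
      = qbinom Q (Suc n) (Suc j) * (qpoch Q Q (Suc j) * qpoch Q Q (Suc n - Suc j))"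
    by (simp add: qpoch_self_Suc algebra_simps)
  also have "\<dots> = qpoch Q Q (Suc n)"
    using True by (intro qbinom_mult_qpoch) simp
  also have "\<dots> = (1 - Q ^ Suc n) * qbinom Q n j * ?M"
    using qbinom_mult_qpoch[OF True, of Q] by (simp add: qpoch_self_Suc algebra_simps)
  finally show ?thesis
    using nz by simp
qed (simp add: qbinom_eq_0)

lemma qbinom_absorb_Suc_right:
  fixes Q :: "'a::idom"
  assumes nz: "\<And>k. qpoch Q Q k \<noteq> 0"
  shows "qbinom Q n (Suc j) * (1 - Q ^ Suc j) = qbinom Q n j * (1 - Q ^ (n - j))"
proof (cases "j < n")
  case True
  let ?M = "qpoch Q Q j * qpoch Q Q (n - Suc j)"
  have n_eq: "n - j = Suc (n - Suc j)"
    using True by simp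
  have "qbinom Q n (Suc j) * (1 - Q ^ Suc j) * ?M
      = qbinom Q n (Suc j) * (qpoch Q Q (Suc j) * qpoch Q Q (n - Suc j))"
    by (simp add: qpoch_self_Suc algebra_simps)
  also have "\<dots> = qpoch Q Q n"
    using True by (intro qbinom_mult_qpoch) simp
  also have "\<dots> = qbinom Q n j * (qpoch Q Q j * qpoch Q Q (n - j))"
    using True by (intro qbinom_mult_qpoch[symmetric]) simp
  also have "\<dots> = qbinom Q n j * (1 - Q ^ (n - j)) * ?M"
    unfolding n_eq qpoch_self_Suc by (simp add: algebra_simps)
  finally show ?thesis
    using nz by simp
next
  case False
  then show ?thesis
    by (cases "j = n") (simp_all add: qbinom_eq_0)
qed

definition rogers_szego :: "'a::comm_ring_1 \<Rightarrow> nat \<Rightarrow> 'a \<Rightarrow> 'a" where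
  "rogers_szego Q n s = (\<Sum>j\<le>n. qbinom Q n j * s ^ j)"

lemma rogers_szego_upto:
  "n \<le> N \<Longrightarrow> rogers_szego Q n s = (\<Sum>j\<le>N. qbinom Q n j * s ^ j)"
  unfolding rogers_szego_def by (rule sum.mono_neutral_left) (auto simp: qbinom_eq_0)

lemma rogers_szego_Suc: "rogers_szego Q (Suc n) s = s * rogers_szego Q n s + rogers_szego Q n (Q * s)"
proof -
  have "rogers_szego Q n (Q * s) = (\<Sum>j\<le>Suc n. qbinom Q n j * (Q * s) ^ j)"
    by (rule rogers_szego_upto) simp
  also have "\<dots> = 1 + (\<Sum>j\<le>n. qbinom Q n (Suc j) * (Q * s) ^ Suc j)"
    by (subst sum.atMost_Suc_shift) (simp del: power_Suc)
  finally have shifted: "rogers_szego Q n (Q * s) = \<dots>" .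
  have "rogers_szego Q (Suc n) s = 1 + (\<Sum>j\<le>n. qbinom Q (Suc n) (Suc j) * s ^ Suc j)"
    unfolding rogers_szego_def by (subst sum.atMost_Suc_shift) (simp del: qbinom.simps)
  also have "\<dots> = 1 + (\<Sum>j\<le>n. qbinom Q n j * s ^ Suc j)
                    + (\<Sum>j\<le>n. qbinom Q n (Suc j) * (Q * s) ^ Suc j)"
    by (simp add: sum.distrib[symmetric] algebra_simps power_mult_distrib)
  finally show ?thesis
    using shifted by (simp add: rogers_szego_def sum_distrib_left algebra_simps)
qed

lemma rogers_szego_q_diff:
  fixes Q :: "'a::idom"
  assumes nz: "\<And>k. qpoch Q Q k \<noteq> 0"
  shows "rogers_szego Q (Suc n) s - rogers_szego Q (Suc n) (Q * s) = s * (1 - Q ^ Suc n) * rogers_szego Q n s"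
proof -
  have "rogers_szego Q (Suc n) s - rogers_szego Q (Suc n) (Q * s)
      = (\<Sum>j\<le>Suc n. qbinom Q (Suc n) j * (s ^ j - (Q * s) ^ j))"
    unfolding rogers_szego_def by (simp only: sum_subtractf[symmetric] right_diff_distrib)
  also have "\<dots> = (\<Sum>j\<le>n. qbinom Q (Suc n) (Suc j) * (1 - Q ^ Suc j) * s ^ Suc j)"
    by (subst sum.atMost_Suc_shift) (simp add: power_mult_distrib algebra_simps del: qbinom.simps power_Suc)
  also have "\<dots> = (\<Sum>j\<le>n. (1 - Q ^ Suc n) * qbinom Q n j * s ^ Suc j)"
    by (simp only: qbinom_absorb_Suc_Suc[OF nz])
  also have "\<dots> = s * (1 - Q ^ Suc n) * rogers_szego Q n s"
    unfolding rogers_szego_def by (simp add: sum_distrib_left algebra_simps)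
  finally show ?thesis .
qed

lemma rogers_szego_q_diff_dual:
  fixes Q :: "'a::idom"
  assumes nz: "\<And>k. qpoch Q Q k \<noteq> 0"
  shows "rogers_szego Q n (Q * s) - rogers_szego Q n (Q * (Q * s))
       = Q * s * (rogers_szego Q n (Q * s) - Q ^ n * rogers_szego Q n s)"
proof -
  have "rogers_szego Q n (Q * s) - rogers_szego Q n (Q * (Q * s))
      = (\<Sum>j\<le>Suc n. qbinom Q n j * ((Q * s) ^ j - (Q * (Q * s)) ^ j))"
    using rogers_szego_upto[of n "Suc n" Q] by (simp add: sum_subtractf[symmetric] right_diff_distrib)
  also have "\<dots> = (\<Sum>j\<le>n. qbinom Q n (Suc j) * (1 - Q ^ Suc j) * (Q ^ Suc j * s ^ Suc j))"
    by (subst sum.atMost_Suc_shift) (simp add: power_mult_distrib algebra_simps del: qbinom.simps power_Suc)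
  also have "\<dots> = (\<Sum>j\<le>n. qbinom Q n j * (1 - Q ^ (n - j)) * (Q ^ Suc j * s ^ Suc j))"
    by (simp only: qbinom_absorb_Suc_right[OF nz])
  also have "\<dots> = (\<Sum>j\<le>n. Q * s * (qbinom Q n j * ((Q * s) ^ j - Q ^ n * s ^ j)))"
  proof (rule sum.cong)
    fix j assume "j \<in> {..n}"
    then have "Q ^ (n - j) * Q ^ j = Q ^ n"
      by (simp add: power_add[symmetric])
    then show "qbinom Q n j * (1 - Q ^ (n - j)) * (Q ^ Suc j * s ^ Suc j)
             = Q * s * (qbinom Q n j * ((Q * s) ^ j - Q ^ n * s ^ j))"
      by (simp add: algebra_simps power_mult_distrib)
  qed simp
  also have "\<dots> = Q * s * (rogers_szego Q n (Q * s) - Q ^ n * rogers_szego Q n s)"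
    unfolding rogers_szego_def sum_distrib_left sum_subtractf[symmetric]
    by (rule sum.cong) (simp_all add: algebra_simps)
  finally show ?thesis .
qed

lemma rogers_szego_three_term:
  fixes Q :: "'a::idom"
  assumes nz: "\<And>k. qpoch Q Q k \<noteq> 0"
  shows "rogers_szego Q (Suc (Suc n)) s
       = (1 + s) * rogers_szego Q (Suc n) s - s * (1 - Q ^ Suc n) * rogers_szego Q n s"
  using rogers_szego_Suc[of Q "Suc n" s] rogers_szego_q_diff[OF nz, of n s] by (simp add: algebra_simps)

lemma rogers_szego_minus_one:
  fixes Q :: "'a::idom"
  assumes nz: "\<And>k. qpoch Q Q k \<noteq> 0"
  shows "rogers_szego Q (2 * n) (-1) = qpoch Q (Q ^ 2) n \<and> rogers_szego Q (2 * n + 1) (-1) = 0"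
proof (induction n)
  case 0
  show ?case by (simp add: rogers_szego_def)
next
  case (Suc n)
  have even: "rogers_szego Q (2 * Suc n) (-1) = (1 - Q ^ Suc (2 * n)) * rogers_szego Q (2 * n) (-1)"
    using rogers_szego_three_term[OF nz, of "2 * n" "-1"] by (simp add: algebra_simps)
  have odd: "rogers_szego Q (2 * Suc n + 1) (-1) = (1 - Q ^ Suc (Suc (2 * n))) * rogers_szego Q (2 * n + 1) (-1)"
    using rogers_szego_three_term[OF nz, of "2 * n + 1" "-1"] by (simp add: algebra_simps)
  have "qpoch Q (Q ^ 2) (Suc n) = qpoch Q (Q ^ 2) n * (1 - Q ^ Suc (2 * n))"
    by (simp only: qpoch_Suc power_mult[symmetric] power_Suc2[symmetric])
  with Suc even odd show ?case
    by (simp only: mult.commute) simp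
qed

lemma power2_power: "((q :: 'a::comm_monoid_mult) ^ 2) ^ k = q ^ k * q ^ k"
  by (metis power2_eq_square power_mult_distrib)

lemma rogers_szego_power2_at_q:
  fixes q :: "'a::idom"
  assumes nz: "\<And>k. qpoch (q ^ 2) (q ^ 2) k \<noteq> 0"
  shows "rogers_szego (q ^ 2) n q = qpoch (-q) q n"
proof -
  have "rogers_szego (q ^ 2) n q = qpoch (-q) q n
      \<and> rogers_szego (q ^ 2) (Suc n) q = qpoch (-q) q (Suc n)"
  proof (induction n)
    case 0
    show ?case by (simp add: rogers_szego_def qpoch_def)
  next
    case (Suc n)
    define a where "a = q ^ Suc n"
    have "rogers_szego (q ^ 2) (Suc (Suc n)) q
        = (1 + q) * rogers_szego (q ^ 2) (Suc n) q - q * (1 - (q ^ 2) ^ Suc n) * rogers_szego (q ^ 2) n q"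
      by (rule rogers_szego_three_term[OF nz])
    also have "\<dots> = (1 + q) * (qpoch (-q) q n * (1 + a)) - q * (1 - a * a) * qpoch (-q) q n"
      using Suc.IH power2_power[of q "Suc n"] by (simp add: a_def qpoch_Suc)
    also have "\<dots> = qpoch (-q) q (Suc (Suc n))"
      by (simp add: a_def qpoch_Suc algebra_simps)
    finally show ?case
      using Suc.IH by simp
  qed
  then show ?thesis ..
qed

lemma rogers_szego_power2_at_q3:
  fixes q :: "'a::idom"
  assumes nz: "\<And>k. qpoch (q ^ 2) (q ^ 2) k \<noteq> 0"
  shows "rogers_szego (q ^ 2) n (q ^ 3) = qpoch (-q) q n * (1 - q + q * q ^ n)"
proof (cases n)
  case 0
  then show ?thesis by (simp add: rogers_szego_def)
next
  case (Suc k)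
  define a where "a = q ^ Suc k"
  have "rogers_szego (q ^ 2) (Suc k) (q ^ 2 * q)
      = rogers_szego (q ^ 2) (Suc k) q - q * (1 - (q ^ 2) ^ Suc k) * rogers_szego (q ^ 2) k q"
    using rogers_szego_q_diff[OF nz, of k q] by (simp add: algebra_simps)
  also have "\<dots> = qpoch (-q) q k * (1 + a) - q * (1 - a * a) * qpoch (-q) q k"
    using power2_power[of q "Suc k"] by (simp add: rogers_szego_power2_at_q[OF nz] a_def qpoch_Suc)
  also have "\<dots> = qpoch (-q) q (Suc k) * (1 - q + q * a)"
    by (simp add: a_def qpoch_Suc algebra_simps)
  finally show ?thesis
    using Suc by (simp add: a_def power_Suc2[symmetric] numeral_3_eq_3)
qed

lemma coupled_recurrence_qT_qUm1:
  fixes h g :: "nat \<Rightarrow> 'a::comm_ring_1"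
  assumes g_Suc: "\<And>m. g (Suc m) = h m + Q ^ m * g m"
    and h_Suc: "\<And>m. h (Suc m) = h m + Q ^ m * (1 + S) * g m"
    and g_0: "g 0 = 0"
  shows "h m = h 0 * qT m 1 S Q \<and> g m = h 0 * qUm1 m 1 S Q"
proof -
  have h_rec: "h (Suc (Suc m)) = (1 + Q ^ Suc m) * h (Suc m) + Q ^ Suc m * S * h m" for m
  proof -
    have "h (Suc (Suc m)) = h (Suc m) + Q ^ Suc m * (1 + S) * h m + Q ^ Suc m * (Q ^ m * (1 + S) * g m)"
      using h_Suc[of "Suc m"] g_Suc[of m] by (simp add: algebra_simps)
    also have "\<dots> = h (Suc m) + Q ^ Suc m * (1 + S) * h m + Q ^ Suc m * (h (Suc m) - h m)"
      using h_Suc[of m] by simp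
    finally show ?thesis
      by (simp add: algebra_simps)
  qed
  have g_rec: "g (Suc (Suc m)) = (1 + Q ^ Suc m) * g (Suc m) + Q ^ m * S * g m" for m
  proof -
    have "g (Suc (Suc m)) = h m + Q ^ m * (1 + S) * g m + Q ^ Suc m * g (Suc m)"
      using g_Suc[of "Suc m"] h_Suc[of m] by simp
    also have "\<dots> = (g (Suc m) - Q ^ m * g m) + Q ^ m * (1 + S) * g m + Q ^ Suc m * g (Suc m)"
      using g_Suc[of m] by simp
    finally show ?thesis
      by (simp add: algebra_simps)
  qed
  have "h m = h 0 * qT m 1 S Q \<and> g m = h 0 * qUm1 m 1 S Q
      \<and> h (Suc m) = h 0 * qT (Suc m) 1 S Q \<and> g (Suc m) = h 0 * qUm1 (Suc m) 1 S Q"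
  proof (induction m)
    case 0
    show ?case using g_0 g_Suc[of 0] h_Suc[of 0] by (simp add: qUm1_def)
  next
    case (Suc m)
    then show ?case
      using h_rec[of m] g_rec[of m] by (cases m) (simp_all add: qUm1_def algebra_simps)
  qed
  then show ?thesis by blast
qed

lemma recurrence_qV:
  fixes k :: "nat \<Rightarrow> 'a::comm_ring_1"
  assumes k_rec: "\<And>m. k (Suc (Suc m)) = (1 + p ^ (2 * m + 3)) * x * k (Suc m) - p ^ (2 * m + 3) * s ^ 2 * k m"
    and k_1: "k 1 = k 0 * qV 1 x s p"
  shows "k m = k 0 * qV m x s p"
proof -
  have "k m = k 0 * qV m x s p \<and> k (Suc m) = k 0 * qV (Suc m) x s p"
  proof (induction m)
    case 0
    show ?case using k_1 by simp
  next
    case (Suc m)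
    have "2 * Suc (Suc m) - 1 = 2 * m + 3" by simp
    then show ?case
      using Suc k_rec[of m] by (simp only: qV.simps) (simp add: algebra_simps)
  qed
  then show ?thesis ..
qed

lemma rogers_szego_neg_power:
  fixes Q :: "'a::idom"
  assumes nz: "\<And>k. qpoch Q Q k \<noteq> 0" and "n \<ge> 1"
  shows "rogers_szego Q (2 * n) (- (Q ^ m)) = qpoch Q (Q ^ 2) n * qT m 1 (- (Q ^ (2 * n))) Q
       \<and> rogers_szego Q (2 * n - 1) (- (Q ^ m)) = qpoch Q (Q ^ 2) n * qUm1 m 1 (- (Q ^ (2 * n))) Q"
proof -
  define M where "M = 2 * n - 1"
  have M: "2 * n = Suc M" "M = 2 * (n - 1) + 1"
    using \<open>n \<ge> 1\<close> by (simp_all add: M_def)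
  define h where "h m = rogers_szego Q (Suc M) (- (Q ^ m))" for m
  define g where "g m = rogers_szego Q M (- (Q ^ m))" for m
  have "h m = h 0 * qT m 1 (- (Q ^ Suc M)) Q \<and> g m = h 0 * qUm1 m 1 (- (Q ^ Suc M)) Q"
  proof (rule coupled_recurrence_qT_qUm1)
    show "g (Suc m) = h m + Q ^ m * g m" for m
      using rogers_szego_Suc[of Q M "- (Q ^ m)"] by (simp add: h_def g_def)
    show "h (Suc m) = h m + Q ^ m * (1 + - (Q ^ Suc M)) * g m" for m
      using rogers_szego_q_diff[OF nz, of M "- (Q ^ m)"] by (simp add: h_def g_def algebra_simps)
    show "g 0 = 0"
      using rogers_szego_minus_one[OF nz, of "n - 1"] by (simp add: g_def M(2))
  qed
  moreover have "h 0 = qpoch Q (Q ^ 2) n"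
    using rogers_szego_minus_one[OF nz, of n] by (simp add: h_def M(1)[symmetric])
  ultimately show ?thesis
    by (simp add: h_def g_def M(1))
qed

lemma rogers_szego_power2_odd_power:
  fixes q :: "'a::idom"
  assumes nz: "\<And>k. qpoch (q ^ 2) (q ^ 2) k \<noteq> 0"
  shows "rogers_szego (q ^ 2) n (q ^ (2 * m + 1)) = qpoch (-q) q n * qV m 1 (- (q ^ n)) (-q)"
proof -
  define k where "k m = rogers_szego (q ^ 2) n (q ^ (2 * m + 1))" for m
  have "k m = k 0 * qV m 1 (- (q ^ n)) (-q)"
  proof (rule recurrence_qV)
    fix m
    have e1: "q ^ 2 * q ^ (2 * m + 1) = q ^ (2 * Suc m + 1)"
      and e2: "q ^ 2 * q ^ (2 * Suc m + 1) = q ^ (2 * Suc (Suc m) + 1)"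
      and e3: "q ^ 2 * q ^ (2 * m + 1) = q ^ (2 * m + 3)"
      by (simp_all add: power_add[symmetric] eval_nat_numeral)
    have "k (Suc m) - k (Suc (Suc m)) = q ^ 2 * q ^ (2 * m + 1) * (k (Suc m) - (q ^ 2) ^ n * k m)"
      unfolding k_def e2[symmetric] e1[symmetric] by (rule rogers_szego_q_diff_dual[OF nz])
    then have "k (Suc (Suc m)) = (1 - q ^ (2 * m + 3)) * k (Suc m) + q ^ (2 * m + 3) * q ^ (2 * n) * k m"
      unfolding e3 power_mult[symmetric] by (simp add: algebra_simps)
    moreover have "(-q) ^ (2 * m + 3) = - (q ^ (2 * m + 3))" "(- (q ^ n)) ^ 2 = q ^ (2 * n)"
      by (simp_all add: power_mult[symmetric] mult.commute)
    ultimately show "k (Suc (Suc m))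
        = (1 + (-q) ^ (2 * m + 3)) * 1 * k (Suc m) - (-q) ^ (2 * m + 3) * (- (q ^ n)) ^ 2 * k m"
      by simp
  next
    have "k 1 = rogers_szego (q ^ 2) n (q ^ 3)"
      by (simp add: k_def eval_nat_numeral)
    then show "k 1 = k 0 * qV 1 1 (- (q ^ n)) (-q)"
      using rogers_szego_power2_at_q[OF nz, of n] rogers_szego_power2_at_q3[OF nz, of n]
      by (simp add: k_def algebra_simps)
  qed
  then show ?thesis
    by (simp add: k_def rogers_szego_power2_at_q[OF nz])
qed

lemma qT_minus_one: "qT m 1 (-1) Q = 1"
proof -
  have "qT m 1 (-1) Q = 1 \<and> qT (Suc m) 1 (-1) Q = 1"
    by (induction m) simp_all
  then show ?thesis ..
qed

lemma rpoly_eq_rogers_szego: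
  assumes nz: "\<And>k. qpoch Q Q k \<noteq> 0"
  shows "rpoly n s Q = rogers_szego Q n s"
  unfolding rpoly_def rogers_szego_def atLeast0AtMost
proof (rule sum.cong[OF refl])
  fix j assume "j \<in> {..n}"
  then have "j \<le> n" by simp
  let ?M = "qpoch Q Q j * qpoch Q Q (n - j)"
  have "gbinom Q n j = qbinom Q n j * ?M div ?M"
    unfolding gbinom_def using \<open>j \<le> n\<close> qbinom_mult_qpoch[of j n Q] by simp
  also have "\<dots> = qbinom Q n j"
    using nz by simp
  finally show "gbinom Q n j * s ^ j = qbinom Q n j * s ^ j" by simp
qed

lemma qpoch_qX_power_nonzero:
  assumes "0 < e"
  shows "qpoch (qX ^ e) (qX ^ e) k \<noteq> 0"
proof -
  have "degree (qX ^ (e * j + e)) = e * j + e" for j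
    by (simp add: qX_def degree_power_eq)
  then have "qX ^ (e * j + e) \<noteq> 1" for j
    using \<open>0 < e\<close> by (metis add_gr_0 degree_1 less_nat_zero_code)
  then have "1 - (qX ^ e) ^ j * qX ^ e \<noteq> 0" for j
    by (simp add: power_mult power_add)
  then show ?thesis
    unfolding qpoch_def by (simp add: prod_zero_iff)
qed

theorem corollary2p2:
  fixes m :: nat
  shows "(\<forall>n::nat. rpoly (2 * n) (- (qX ^ m)) qX
            = qpoch qX (qX ^ 2) n * qT m 1 (- (qX ^ (2 * n))) qX)
       \<and> (\<forall>n::nat. n \<ge> 1 \<longrightarrow> rpoly (2 * n - 1) (- (qX ^ m)) qX
            = qpoch qX (qX ^ 2) n * qUm1 m 1 (- (qX ^ (2 * n))) qX)
       \<and> (\<forall>n::nat. rpoly n (qX ^ (2 * m + 1)) (qX ^ 2)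
            = qpoch (- qX) qX n * qV m 1 (- (qX ^ n)) (- qX))"
proof (intro conjI allI impI)
  have nz1: "\<And>k. qpoch qX qX k \<noteq> 0" and nz2: "\<And>k. qpoch (qX ^ 2) (qX ^ 2) k \<noteq> 0"
    using qpoch_qX_power_nonzero[of 1] qpoch_qX_power_nonzero[of 2] by simp_all
  fix n :: nat
  show "rpoly (2 * n) (- (qX ^ m)) qX = qpoch qX (qX ^ 2) n * qT m 1 (- (qX ^ (2 * n))) qX"
  proof (cases "n = 0")
    case True
    then show ?thesis by (simp add: rpoly_eq_rogers_szego[OF nz1] rogers_szego_def qT_minus_one)
  next
    case False
    then show ?thesis using rogers_szego_neg_power[OF nz1, of n m] by (simp add: rpoly_eq_rogers_szego[OF nz1])
  qed
  show "rpoly n (qX ^ (2 * m + 1)) (qX ^ 2) = qpoch (- qX) qX n * qV m 1 (- (qX ^ n)) (- qX)"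
    using rogers_szego_power2_odd_power[OF nz2, of n m] by (simp add: rpoly_eq_rogers_szego[OF nz2])
  assume "n \<ge> 1"
  then show "rpoly (2 * n - 1) (- (qX ^ m)) qX = qpoch qX (qX ^ 2) n * qUm1 m 1 (- (qX ^ (2 * n))) qX"
    using rogers_szego_neg_power[OF nz1, of n m] by (simp add: rpoly_eq_rogers_szego[OF nz1])
qed

end
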